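(* Let $\mathcal{A}$ be a safe GTA without renamings with $n\ge1$ clocks, and let $M\in\mathbb{N}$ be such that every finite constant $c$ in a guard of $\mathcal{A}$ satisfies $|c|\le M$. Let $\rho: (q_1,v_1)\xrightarrow{\delta_1,t_1}(q_2,v_2)\xrightarrow{\delta_2,t_2}\cdots(q_k,v_k)$ be a path in the transition system of $\mathcal{A}$ such that $v_1\sim_M v_k$ and for every future clock $x$, either $x$ is released in the transition sequence $t_1\dots t_{k-1}$ or $v_1(x)=-\infty$. Let $L=\{x\mid -M\le v_1(x)\}$, and let $v_k'$ be a valuation with $v_k'\!\downarrow_L=v_k\!\downarrow_L$ and $v_1\approx_M v_k'$. Then there is a path $\rho': (q_1,v_1)=(q_1,v_1')\xrightarrow{\delta_1,t_1}(q_2,v_2')\xrightarrow{\delta_2,t_2}\cdots(q_k,v_k')$ in the transition system of $\mathcal{A}$ leading from $(q_1,v_1)$ to $(q_k,v_k')$.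
   Context: Clocks, valuations: $X=X_F\uplus X_H$ (future / history clocks), $n=|X|$, constant clock $0$; $\overline{\mathbb{R}}=\mathbb{R}\cup\{\pm\infty\}$ with $(+\infty)+\alpha=+\infty$, $(-\infty)+\beta=-\infty$ for $\beta\ne+\infty$, $-(\pm\infty)=\mp\infty$. A valuation $v:X\cup\{0\}\to\overline{\mathbb{R}}$ has $v(0)=0$, history clocks in $\mathbb{R}_{\ge0}\cup\{+\infty\}$, future clocks in $\mathbb{R}_{\le0}\cup\{-\infty\}$; $v\!\downarrow_L$ is restriction to $L$. Constraints: conjunctions of $x-y\triangleleft c$ ($x,y\in X\cup\{0\}$, ${\triangleleft}\in\{<,\le\}$, $c\in\mathbb{Z}\cup\{\pm\infty\}$), $v\models x-y\triangleleft c$ iff $v(x)-v(y)\triangleleft c$. $v+\delta$ adds $\delta$ to each clock; $[R]v$ is the set of $v'$ with $v'(x)=0$ for $x\in R\cap X_H$, $v'(x)=v(x)$ for $x\notin R$, arbitrary for $x\in R\cap X_F$ (released). GTA without renamings: transitions $t=(q,a,\mathsf{prog},q')$, $\mathsf{prog}$ a sequence of guards $g$ ($v\xrightarrow{g}v$ iff $v\models g$) and changes $[R]$ ($v\xrightarrow{[R]}v'$ iff $v'\in[R]v$); a future clock $x$ is released in $t$ if $\mathsf{prog}$ contains $[R]$ with $x\in R$. A step $(q,v)\xrightarrow{\delta,t}(q',v')$ means $v+\delta$ is a valuation and $v+\delta\xrightarrow{\mathsf{prog}}v'$. Safety: with $X_D$ the future clocks occurring in guards $x-y\triangleleft c$ with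 $x,y\in X_F$, every program checks each clock of $X_D$ to be $0$ or $-\infty$ before releasing it, and initial guards force every history clock to $0$ or $+\infty$. For $\alpha\in\mathbb{R}$, $\{\alpha\}=\alpha-\lfloor\alpha\rfloor$. $\alpha\sim_K\beta$ iff $\alpha\triangleleft c\iff\beta\triangleleft c$ for ${\triangleleft}\in\{<,\le\}$, $c\in\{\pm\infty\}$ or $c\in\mathbb{Z}$ with $|c|\le K$; $v_1\sim_M v_2$ iff $v_1(x)\sim_{nM}v_2(x)$ for all $x$ and $v_1(x)-v_1(y)\sim_{(n+1)M}v_2(x)-v_2(y)$ for all $x,y$. $v_1\approx_M v_2$ iff for all clocks $x,y$: (1) $v_1(x)\triangleleft c\iff v_2(x)\triangleleft c$ for $c\in\{\pm\infty\}$ or $c\in\mathbb{Z}$, $c\le M$; (2) $v_1\models x-y\triangleleft c\iff v_2\models x-y\triangleleft c$ for $c\in\{\pm\infty\}$ or $c\in\mathbb{Z}$, $|c|\le M$; (3) if $-\infty<v_1(x),v_1(y)\le M$ then $\{v_1(x)\}\le\{v_1(y)\}\iff\{v_2(x)\}\le\{v_2(y)\}$. *)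

theory Defs
  imports Complex_Main "HOL-Library.Extended_Real"
begin

text \<open>Clocks are the elements of a finite type 'c (so n = CARD('c) >= 1).
  The set XF of future clocks is a parameter; history clocks are the others.
  The constant clock 0 is added via the datatype clk.\<close>

datatype 'c clk = Zero | Clk 'c

type_synonym 'c valuation = "'c \<Rightarrow> ereal"

fun clk_val :: "'c valuation \<Rightarrow> 'c clk \<Rightarrow> ereal" where
  "clk_val v Zero = 0"
| "clk_val v (Clk x) = v x"

text \<open>Difference with the paper's conventions: a - b = a + (-b), where
  the ereal addition satisfies (+oo)+a = +oo and (-oo)+b = -oo for b ~= +oo.\<close>
definition ediff :: "ereal \<Rightarrow> ereal \<Rightarrow> ereal" where
  "ediff a b = a + (- b)"

definition is_val :: "'c set \<Rightarrow> 'c valuation \<Rightarrow> bool" where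
  "is_val XF v \<longleftrightarrow> (\<forall>x. x \<notin> XF \<longrightarrow> 0 \<le> v x) \<and> (\<forall>x. x \<in> XF \<longrightarrow> v x \<le> 0)"

datatype zbound = ZFin int | ZPInf | ZMInf

fun zb_val :: "zbound \<Rightarrow> ereal" where
  "zb_val (ZFin c) = ereal (of_int c)"
| "zb_val ZPInf = \<infinity>"
| "zb_val ZMInf = - \<infinity>"

text \<open>Atomic constraint x - y < c (strict = True) or x - y <= c (strict = False).\<close>
type_synonym 'c atom = "'c clk \<times> 'c clk \<times> bool \<times> zbound"
type_synonym 'c guard = "'c atom list"

fun sat_atom :: "'c valuation \<Rightarrow> 'c atom \<Rightarrow> bool" where
  "sat_atom v (x, y, strict, c) =
     (if strict then ediff (clk_val v x) (clk_val v y) < zb_val c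
      else ediff (clk_val v x) (clk_val v y) \<le> zb_val c)"

definition sat :: "'c valuation \<Rightarrow> 'c guard \<Rightarrow> bool" where
  "sat v g \<longleftrightarrow> (\<forall>a \<in> set g. sat_atom v a)"

datatype 'c instr = Guard "'c guard" | Change "'c set"

type_synonym 'c prog = "'c instr list"
type_synonym ('q, 'a, 'c) transition = "'q \<times> 'a \<times> 'c prog \<times> 'q"

record ('q, 'a, 'c) gta =
  gta_init :: "('q \<times> 'c guard) set"
  gta_trans :: "('q, 'a, 'c) transition set"

definition is_gta :: "('q, 'a, 'c) gta \<Rightarrow> bool" where
  "is_gta A \<longleftrightarrow> finite (gta_init A) \<and> finite (gta_trans A)"

definition t_src :: "('q, 'a, 'c) transition \<Rightarrow> 'q" where
  "t_src t = (case t of (q, a, p, q') \<Rightarrow> q)"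
definition t_prog :: "('q, 'a, 'c) transition \<Rightarrow> 'c prog" where
  "t_prog t = (case t of (q, a, p, q') \<Rightarrow> p)"
definition t_tgt :: "('q, 'a, 'c) transition \<Rightarrow> 'q" where
  "t_tgt t = (case t of (q, a, p, q') \<Rightarrow> q')"

definition change :: "'c set \<Rightarrow> 'c set \<Rightarrow> 'c valuation \<Rightarrow> 'c valuation set" where
  "change XF R v = {u. is_val XF u \<and> (\<forall>x \<in> R. x \<notin> XF \<longrightarrow> u x = 0)
                        \<and> (\<forall>x. x \<notin> R \<longrightarrow> u x = v x)}"

fun prog_sem :: "'c set \<Rightarrow> 'c prog \<Rightarrow> 'c valuation \<Rightarrow> 'c valuation \<Rightarrow> bool" where
  "prog_sem XF [] v v' = (v' = v)"
| "prog_sem XF (Guard g # p) v v' = (sat v g \<and> prog_sem XF p v v')"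
| "prog_sem XF (Change R # p) v v' = (\<exists>u \<in> change XF R v. prog_sem XF p u v')"

definition shift :: "'c valuation \<Rightarrow> real \<Rightarrow> 'c valuation" where
  "shift v \<delta> = (\<lambda>x. v x + ereal \<delta>)"

definition step :: "'c set \<Rightarrow> ('q, 'a, 'c) gta \<Rightarrow> 'q \<Rightarrow> 'c valuation \<Rightarrow> real
                     \<Rightarrow> ('q, 'a, 'c) transition \<Rightarrow> 'q \<Rightarrow> 'c valuation \<Rightarrow> bool" where
  "step XF A q v \<delta> t q' v' \<longleftrightarrow>
     t \<in> gta_trans A \<and> t_src t = q \<and> t_tgt t = q' \<and> 0 \<le> \<delta> \<and>
     is_val XF v \<and> is_val XF v' \<and>
     is_val XF (shift v \<delta>) \<and> prog_sem XF (t_prog t) (shift v \<delta>) v'"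

definition is_path :: "'c set \<Rightarrow> ('q, 'a, 'c) gta \<Rightarrow> nat \<Rightarrow> (nat \<Rightarrow> 'q) \<Rightarrow> (nat \<Rightarrow> 'c valuation)
                        \<Rightarrow> (nat \<Rightarrow> real) \<Rightarrow> (nat \<Rightarrow> ('q, 'a, 'c) transition) \<Rightarrow> bool" where
  "is_path XF A k q v d t \<longleftrightarrow> 1 \<le> k \<and> (\<forall>i \<in> {1..k}. is_val XF (v i)) \<and>
     (\<forall>i \<in> {1..<k}. step XF A (q i) (v i) (d i) (t i) (q (Suc i)) (v (Suc i)))"

definition released :: "'c \<Rightarrow> ('q, 'a, 'c) transition \<Rightarrow> bool" where
  "released x t \<longleftrightarrow> (\<exists>R. Change R \<in> set (t_prog t) \<and> x \<in> R)"

definition guards_of :: "('q, 'a, 'c) gta \<Rightarrow> 'c guard set" where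
  "guards_of A = snd ` gta_init A \<union> {g. \<exists>t \<in> gta_trans A. Guard g \<in> set (t_prog t)}"

definition bounded_by :: "('q, 'a, 'c) gta \<Rightarrow> nat \<Rightarrow> bool" where
  "bounded_by A M \<longleftrightarrow> (\<forall>g \<in> guards_of A. \<forall>(x, y, s, c) \<in> set g.
      \<forall>c'. c = ZFin c' \<longrightarrow> \<bar>c'\<bar> \<le> int M)"

definition XD :: "'c set \<Rightarrow> ('q, 'a, 'c) gta \<Rightarrow> 'c set" where
  "XD XF A = {z. \<exists>g \<in> guards_of A. \<exists>x y s c. (Clk x, Clk y, s, c) \<in> set g
                  \<and> x \<in> XF \<and> y \<in> XF \<and> (z = x \<or> z = y)}"

definition safe :: "'c set \<Rightarrow> ('q, 'a, 'c) gta \<Rightarrow> bool" where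
  "safe XF A \<longleftrightarrow>
    (\<forall>t \<in> gta_trans A. \<forall>p1 R p2. t_prog t = p1 @ Change R # p2 \<longrightarrow>
       (\<forall>u u'. is_val XF u \<and> prog_sem XF p1 u u' \<longrightarrow>
          (\<forall>x \<in> R \<inter> XD XF A. u' x = 0 \<or> u' x = - \<infinity>))) \<and>
    (\<forall>(q, g) \<in> gta_init A. \<forall>u. is_val XF u \<and> sat u g \<longrightarrow>
       (\<forall>x. x \<notin> XF \<longrightarrow> u x = 0 \<or> u x = \<infinity>))"

definition bset :: "nat \<Rightarrow> ereal set" where
  "bset K = {\<infinity>, - \<infinity>} \<union> {ereal (of_int c) | c. \<bar>c\<bar> \<le> int K}"

definition simK :: "nat \<Rightarrow> ereal \<Rightarrow> ereal \<Rightarrow> bool" where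
  "simK K a b \<longleftrightarrow> (\<forall>c \<in> bset K. (a < c \<longleftrightarrow> b < c) \<and> (a \<le> c \<longleftrightarrow> b \<le> c))"

definition sim_M :: "nat \<Rightarrow> ('c::finite) valuation \<Rightarrow> 'c valuation \<Rightarrow> bool" where
  "sim_M M v1 v2 \<longleftrightarrow>
     (\<forall>x. simK (card (UNIV :: 'c set) * M) (v1 x) (v2 x)) \<and>
     (\<forall>x y. simK ((card (UNIV :: 'c set) + 1) * M) (ediff (v1 x) (v1 y)) (ediff (v2 x) (v2 y)))"

definition approx_M :: "nat \<Rightarrow> 'c valuation \<Rightarrow> 'c valuation \<Rightarrow> bool" where
  "approx_M M v1 v2 \<longleftrightarrow>
     (\<forall>x. \<forall>c \<in> {\<infinity>, - \<infinity>} \<union> {ereal (of_int c) | c. c \<le> int M}.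
        (v1 x < c \<longleftrightarrow> v2 x < c) \<and> (v1 x \<le> c \<longleftrightarrow> v2 x \<le> c)) \<and>
     (\<forall>x y. \<forall>c \<in> bset M.
        (ediff (v1 x) (v1 y) < c \<longleftrightarrow> ediff (v2 x) (v2 y) < c) \<and>
        (ediff (v1 x) (v1 y) \<le> c \<longleftrightarrow> ediff (v2 x) (v2 y) \<le> c)) \<and>
     (\<forall>x y. - \<infinity> < v1 x \<and> v1 x \<le> ereal (real M) \<and> - \<infinity> < v1 y \<and> v1 y \<le> ereal (real M) \<longrightarrow>
        (frac (real_of_ereal (v1 x)) \<le> frac (real_of_ereal (v1 y)) \<longleftrightarrow>
         frac (real_of_ereal (v2 x)) \<le> frac (real_of_ereal (v2 y))))"

end

(* Let N be the set of future clocks x with -\<infinity> < v1(x) < -M. Outside N the valuation vk' agrees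
   with vk, and on N both are finite and below -M. Every clock of N is released somewhere along
   the path; at each position we add vk'(x) - vk(x) to those clocks of N that are not released
   any more before the end, so the new path starts in v1 and ends in vk'. Guards stay satisfied:
   a moved clock lies below -M - T, where T is the delay still to come, so its comparisons with
   constants, history clocks and future clocks that are -\<infinity> or at least -T (by safety, this
   holds for every future clock of a diagonal guard that is still to be released) do not change;
   all other diagonal partners run in lockstep with vk, and there the differences of vk and vk'
   are M-equivalent. *)

theory Submission
  imports Defs
begin

lemma simK_refl: "simK K a a"
  by (simp add: simK_def)

lemma simK_sym: "simK K a b \<Longrightarrow> simK K b a"
  by (simp add: simK_def)

lemma simK_trans: "simK K a b \<Longrightarrow> simK K b c \<Longrightarrow> simK K a c"
  by (simp add: simK_def)

lemma simK_mono: "K \<le> K' \<Longrightarrow> simK K' a b \<Longrightarrow> simK K a b"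
  unfolding simK_def bset_def by force

lemma simK_below:
  assumes "a < ereal (- real K)" "b < ereal (- real K)" "a \<noteq> -\<infinity>" "b \<noteq> -\<infinity>"
  shows "simK K a b"
  using assms unfolding simK_def bset_def
  by (cases a; cases b) auto

lemma simK_above:
  assumes "ereal (real K) < a" "ereal (real K) < b" "a \<noteq> \<infinity>" "b \<noteq> \<infinity>"
  shows "simK K a b"
  using assms unfolding simK_def bset_def
  by (cases a; cases b) auto

lemma ediff_simps [simp]:
  "ediff (ereal a) (ereal b) = ereal (a - b)"
  "ediff (ereal a) \<infinity> = -\<infinity>" "ediff (ereal a) (-\<infinity>) = \<infinity>"
  "ediff \<infinity> (ereal a) = \<infinity>" "ediff (-\<infinity>) (ereal a) = -\<infinity>"
  by (simp_all add: ediff_def)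

lemma simK_ediff_far:
  assumes "r < - real M" "r' < - real M" "y = -\<infinity> \<or> - ereal T \<le> y"
  shows "simK M (ediff (ereal (r - T)) y) (ediff (ereal (r' - T)) y)"
    and "simK M (ediff y (ereal (r - T))) (ediff y (ereal (r' - T)))"
  using assms by (cases y; auto intro: simK_below simK_above simK_refl)+

lemma simK_minf:
  assumes "simK K a b"
  shows "a = -\<infinity> \<longleftrightarrow> b = -\<infinity>"
proof -
  have "-\<infinity> \<in> bset K"
    by (simp add: bset_def)
  with assms have "a \<le> -\<infinity> \<longleftrightarrow> b \<le> -\<infinity>"
    unfolding simK_def by blast
  then show ?thesis
    by simp
qed

lemma sim_M_simK: "sim_M M v1 v2 \<Longrightarrow> simK M (v1 x) (v2 x)"
  unfolding sim_M_def by (rule simK_mono[rotated], blast) (simp add: Suc_le_eq finite_UNIV_card_ge_0)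

lemma sim_M_ediff_simK: "sim_M M v1 v2 \<Longrightarrow> simK M (ediff (v1 x) (v1 y)) (ediff (v2 x) (v2 y))"
  unfolding sim_M_def by (rule simK_mono[rotated], blast) simp

lemma approx_M_ediff_simK: "approx_M M v1 v2 \<Longrightarrow> simK M (ediff (v1 x) (v1 y)) (ediff (v2 x) (v2 y))"
  unfolding approx_M_def simK_def by blast

lemma approx_M_below:
  assumes "approx_M M v1 v2" "c \<le> int M"
  shows "v1 x < ereal (of_int c) \<longleftrightarrow> v2 x < ereal (of_int c)"
  using assms unfolding approx_M_def by blast

lemma approx_M_minf:
  assumes "approx_M M v1 v2"
  shows "v1 x = -\<infinity> \<longleftrightarrow> v2 x = -\<infinity>"
proof -
  from assms have "v1 x \<le> -\<infinity> \<longleftrightarrow> v2 x \<le> -\<infinity>"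
    unfolding approx_M_def by blast
  then show ?thesis
    by simp
qed

lemma sim_M_approx_M_far:
  assumes "sim_M M v1 v2" "approx_M M v1 v2'" "v1 x \<noteq> -\<infinity>" "v1 x < ereal (- real M)"
  shows "\<exists>r r'. v2 x = ereal r \<and> v2' x = ereal r' \<and> r < - real M \<and> r' < - real M"
proof -
  have "- \<infinity> \<in> bset M" "ereal (- real M) \<in> bset M"
    by (auto simp: bset_def intro!: exI[of _ "- int M"])
  with sim_M_simK[OF assms(1), of x] assms(3,4)
  have "v2 x \<noteq> -\<infinity>" "v2 x < ereal (- real M)"
    unfolding simK_def by (metis ereal_infty_less_eq(2))+
  moreover have "v2' x \<noteq> -\<infinity>" "v2' x < ereal (- real M)"
    using approx_M_minf[OF assms(2)] approx_M_below[OF assms(2), of "- int M" x] assms(3,4) by auto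
  ultimately show ?thesis
    by (cases "v2 x"; cases "v2' x") auto
qed

lemma sim_M_approx_M_eq_off_far:
  assumes "sim_M M v1 v2" "approx_M M v1 v2'" "is_val XF v1"
    and near: "\<forall>x \<in> {x. - ereal (real M) \<le> v1 x}. v2' x = v2 x"
    and x: "x \<notin> {x \<in> XF. v1 x \<noteq> -\<infinity> \<and> v1 x < ereal (- real M)}"
  shows "v2' x = v2 x"
proof (cases "v1 x = -\<infinity>")
  case True
  then show ?thesis
    using approx_M_minf[OF assms(2), of x] simK_minf[OF sim_M_simK[OF assms(1)], of x] by simp
next
  case False
  have "- ereal (real M) \<le> v1 x"
  proof (cases "x \<in> XF")
    case True
    with x False show ?thesis
      by auto
  next
    case False
    with assms(3) have "0 \<le> v1 x"
      by (simp add: is_val_def)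
    then show ?thesis
      by (rule order_trans[rotated]) simp
  qed
  with near show ?thesis
    by simp
qed

definition changed_clocks :: "'c prog \<Rightarrow> 'c set" where
  "changed_clocks p = \<Union>{R. Change R \<in> set p}"

lemma changed_clocks_simps [simp]:
  "changed_clocks [] = {}"
  "changed_clocks (Guard g # p) = changed_clocks p"
  "changed_clocks (Change R # p) = R \<union> changed_clocks p"
  by (auto simp: changed_clocks_def)

lemma released_iff_changed_clocks: "released x tr \<longleftrightarrow> x \<in> changed_clocks (t_prog tr)"
  by (auto simp: released_def changed_clocks_def)

lemma prog_sem_unchanged: "prog_sem XF p u w \<Longrightarrow> x \<notin> changed_clocks p \<Longrightarrow> w x = u x"
proof (induction p arbitrary: u)
  case (Cons i p)
  then show ?case by (cases i) (auto simp: change_def)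
qed simp

definition release_safe :: "'c set \<Rightarrow> 'c set \<Rightarrow> 'c prog \<Rightarrow> 'c valuation \<Rightarrow> bool" where
  "release_safe XF D p u \<longleftrightarrow> (\<forall>p1 R p2 u'. p = p1 @ Change R # p2 \<longrightarrow> prog_sem XF p1 u u' \<longrightarrow>
      (\<forall>x \<in> R \<inter> D. u' x = 0 \<or> u' x = -\<infinity>))"

lemma release_safe_Guard:
  "release_safe XF D (Guard g # p) u \<Longrightarrow> sat u g \<Longrightarrow> release_safe XF D p u"
  unfolding release_safe_def by (metis append_Cons prog_sem.simps(2))

lemma release_safe_Change:
  "release_safe XF D (Change R # p) u \<Longrightarrow> w \<in> change XF R u \<Longrightarrow> release_safe XF D p w"
  unfolding release_safe_def by (metis append_Cons prog_sem.simps(3))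

lemma release_safe_changed_clocks:
  assumes "prog_sem XF p u w" "release_safe XF D p u" "x \<in> changed_clocks p" "x \<in> D"
  shows "u x = 0 \<or> u x = -\<infinity>"
  using assms
proof (induction p arbitrary: u)
  case (Cons i p)
  show ?case
  proof (cases i)
    case (Guard g)
    with Cons show ?thesis by (auto dest: release_safe_Guard)
  next
    case (Change R)
    show ?thesis
    proof (cases "x \<in> R")
      case True
      with Cons.prems(2,4) Change show ?thesis
        unfolding release_safe_def by (metis Int_iff append_Nil prog_sem.simps(1))
    next
      case False
      from Cons.prems(1) Change obtain w1 where w1: "w1 \<in> change XF R u" "prog_sem XF p w1 w"
        by auto
      with False have "w1 x = u x" by (auto simp: change_def)
      with Cons.IH[OF w1(2) release_safe_Change] w1(1) Cons.prems Change False show ?thesis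
        by auto
    qed
  qed
qed simp

lemma safe_release_safe:
  "safe XF A \<Longrightarrow> step XF A q v \<delta> tr q' v' \<Longrightarrow> release_safe XF (XD XF A) (t_prog tr) (shift v \<delta>)"
  unfolding safe_def step_def release_safe_def by blast

definition admissible_guard :: "'c set \<Rightarrow> 'c set \<Rightarrow> nat \<Rightarrow> 'c guard \<Rightarrow> bool" where
  "admissible_guard XF D M g \<longleftrightarrow> (\<forall>(\<alpha>, \<beta>, s, c) \<in> set g. zb_val c \<in> bset M \<and>
      (\<forall>a b. \<alpha> = Clk a \<longrightarrow> \<beta> = Clk b \<longrightarrow> a \<in> XF \<longrightarrow> b \<in> XF \<longrightarrow> a \<in> D \<and> b \<in> D))"

lemma bounded_by_admissible_guard:
  assumes "bounded_by A M" "tr \<in> gta_trans A" "Guard g \<in> set (t_prog tr)"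
  shows "admissible_guard XF (XD XF A) M g"
proof -
  have g: "g \<in> guards_of A"
    using assms(2,3) unfolding guards_of_def by blast
  have "zb_val c \<in> bset M" if "(\<alpha>, \<beta>, s, c) \<in> set g" for \<alpha> \<beta> s c
    using assms(1) g that unfolding bounded_by_def bset_def by (cases c) fastforce+
  with g show ?thesis
    unfolding admissible_guard_def XD_def by blast
qed

lemma sat_atom_simK:
  assumes "sat_atom u (\<alpha>, \<beta>, s, c)" "zb_val c \<in> bset M"
    "simK M (ediff (clk_val u \<alpha>) (clk_val u \<beta>)) (ediff (clk_val u' \<alpha>) (clk_val u' \<beta>))"
  shows "sat_atom u' (\<alpha>, \<beta>, s, c)"
  using assms unfolding simK_def by (auto split: if_splits)

definition remaining_delay :: "(nat \<Rightarrow> real) \<Rightarrow> nat \<Rightarrow> nat \<Rightarrow> real" where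
  "remaining_delay d k j = (\<Sum>i \<in> {j..<k}. d i)"

definition released_from :: "(nat \<Rightarrow> ('q, 'a, 'c) transition) \<Rightarrow> nat \<Rightarrow> nat \<Rightarrow> 'c set" where
  "released_from t k j = (\<Union>i \<in> {j..<k}. changed_clocks (t_prog (t i)))"

lemma remaining_delay_Suc: "j < k \<Longrightarrow> remaining_delay d k j = d j + remaining_delay d k (Suc j)"
  by (simp add: remaining_delay_def sum.atLeast_Suc_lessThan)

lemma released_from_Suc:
  "j < k \<Longrightarrow> released_from t k j = changed_clocks (t_prog (t j)) \<union> released_from t k (Suc j)"
proof -
  assume "j < k"
  then have "{j..<k} = insert j {Suc j..<k}" by auto
  then show ?thesis unfolding released_from_def by simp
qed

lemma remaining_delay_nonneg:
  "is_path XF A k q v d t \<Longrightarrow> 1 \<le> j \<Longrightarrow> 0 \<le> remaining_delay d k j"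
  unfolding remaining_delay_def is_path_def step_def by (auto intro: sum_nonneg)

lemma path_unreleased:
  assumes path: "is_path XF A k q v d t" and j: "1 \<le> j" "j \<le> k"
    and x: "x \<notin> released_from t k j"
  shows "v j x + ereal (remaining_delay d k j) = v k x"
  using j(2,1) x
proof (induction rule: inc_induct)
  case (step m)
  then have m: "m \<in> {1..<k}" and x: "x \<notin> changed_clocks (t_prog (t m))" "x \<notin> released_from t k (Suc m)"
    by (auto simp: released_from_Suc)
  with path have "v (Suc m) x = v m x + ereal (d m)"
    by (auto simp: is_path_def step_def shift_def dest!: prog_sem_unchanged[where x = x])
  with step m x show ?case
    by (simp add: remaining_delay_Suc add.assoc)
qed (simp add: remaining_delay_def zero_ereal_def[symmetric])

lemma path_released:
  assumes path: "is_path XF A k q v d t"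
    and safe: "\<forall>i \<in> {1..<k}. release_safe XF D (t_prog (t i)) (shift (v i) (d i))"
    and j: "1 \<le> j" "j \<le> k" and x: "x \<in> D" "x \<in> released_from t k j"
  shows "v j x = -\<infinity> \<or> - ereal (remaining_delay d k j) \<le> v j x"
  using j(2,1) x(2)
proof (induction rule: inc_induct)
  case (step m)
  then have m: "m \<in> {1..<k}" by auto
  have delay: "remaining_delay d k m = d m + remaining_delay d k (Suc m)"
    "0 \<le> remaining_delay d k (Suc m)"
    using m remaining_delay_Suc remaining_delay_nonneg[OF path] by auto
  have sem: "prog_sem XF (t_prog (t m)) (shift (v m) (d m)) (v (Suc m))"
    using path m by (simp add: is_path_def step_def)
  show ?case
  proof (cases "x \<in> changed_clocks (t_prog (t m))")
    case True
    with release_safe_changed_clocks[OF sem] safe m x(1)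
    have "shift (v m) (d m) x = 0 \<or> shift (v m) (d m) x = -\<infinity>"
      by blast
    then have "v m x + ereal (d m) = 0 \<or> v m x + ereal (d m) = -\<infinity>"
      by (simp add: shift_def)
    with delay show ?thesis
      by (cases "v m x") (auto simp: zero_ereal_def)
  next
    case False
    with step have "v (Suc m) x = -\<infinity> \<or> - ereal (remaining_delay d k (Suc m)) \<le> v (Suc m) x"
      by (simp add: released_from_Suc)
    moreover have "v (Suc m) x = v m x + ereal (d m)"
      using prog_sem_unchanged[OF sem False] by (simp add: shift_def)
    ultimately show ?thesis
      using delay by (cases "v m x") auto
  qed
qed (simp add: released_from_def)

lemma path_release_safe:
  "safe XF A \<Longrightarrow> is_path XF A k q v d t \<Longrightarrow>
    \<forall>i \<in> {1..<k}. release_safe XF (XD XF A) (t_prog (t i)) (shift (v i) (d i))"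
  unfolding is_path_def by (auto intro: safe_release_safe)

lemma path_admissible_guards:
  "bounded_by A M \<Longrightarrow> is_path XF A k q v d t \<Longrightarrow>
    \<forall>i \<in> {1..<k}. \<forall>g. Guard g \<in> set (t_prog (t i)) \<longrightarrow> admissible_guard XF (XD XF A) M g"
  unfolding is_path_def step_def by (auto intro: bounded_by_admissible_guard)

locale endpoint_change =
  fixes XF D :: "'c set" and M :: nat and N :: "'c set" and vk vk' :: "'c valuation"
  assumes ediff_simK: "simK M (ediff (vk x) (vk y)) (ediff (vk' x) (vk' y))"
    and N_future: "N \<subseteq> XF"
    and N_far: "x \<in> N \<Longrightarrow> \<exists>r r'. vk x = ereal r \<and> vk' x = ereal r' \<and> r < - real M \<and> r' < - real M"
    and eq_outside_N: "x \<notin> N \<Longrightarrow> vk' x = vk x"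
begin

definition adjust :: "'c set \<Rightarrow> 'c valuation \<Rightarrow> 'c valuation" where
  "adjust S u x = (if x \<in> S then u x + ereal (real_of_ereal (vk' x) - real_of_ereal (vk x)) else u x)"

text \<open>The invariant at a valuation u lying T time units before the end of the path, with S the
  clocks still to be moved: every future partner of a moved clock in a diagonal guard is either
  far above it, or runs in lockstep with vk and is not changed by vk'.\<close>

definition adjustable :: "real \<Rightarrow> 'c set \<Rightarrow> 'c valuation \<Rightarrow> bool" where
  "adjustable T S u \<longleftrightarrow> 0 \<le> T \<and> S \<subseteq> N \<and> (\<forall>x \<in> S. u x + ereal T = vk x) \<and>
     (\<forall>x \<in> XF \<inter> D - S. u x = -\<infinity> \<or> - ereal T \<le> u x \<or> (u x + ereal T = vk x \<and> vk' x = vk x))"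

lemma adjust_empty [simp]: "adjust {} u = u"
  by (simp add: adjust_def fun_eq_iff)

lemma adjust_N_endpoint: "adjust N vk = vk'"
proof
  fix x
  show "adjust N vk x = vk' x"
    using N_far[of x] eq_outside_N[of x] by (cases "x \<in> N") (auto simp: adjust_def)
qed

lemma adjustable_future: "adjustable T S u \<Longrightarrow> S \<subseteq> XF"
  using N_future by (auto simp: adjustable_def)

lemma adjustable_value:
  assumes "adjustable T S u" "x \<in> S"
  obtains r r' where "vk x = ereal r" "vk' x = ereal r'" "r < - real M" "r' < - real M"
    "u x = ereal (r - T)" "adjust S u x = ereal (r' - T)"
proof -
  from assms obtain r r' where r: "vk x = ereal r" "vk' x = ereal r'" "r < - real M" "r' < - real M"
    using N_far unfolding adjustable_def by blast
  from assms have "u x + ereal T = ereal r"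
    using r by (auto simp: adjustable_def)
  then have "u x = ereal (r - T)"
    by (cases "u x") auto
  with that r assms(2) show thesis
    by (simp add: adjust_def)
qed

lemma adjustable_is_val:
  assumes "is_val XF u" "adjustable T S u"
  shows "is_val XF (adjust S u)"
  unfolding is_val_def
proof (intro conjI allI impI)
  fix x
  assume "x \<notin> XF"
  with assms show "0 \<le> adjust S u x"
    using adjustable_future by (auto simp: adjust_def is_val_def)
next
  fix x
  assume x: "x \<in> XF"
  show "adjust S u x \<le> 0"
  proof (cases "x \<in> S")
    case True
    with assms(2) show ?thesis
      by (rule adjustable_value) (use assms(2) in \<open>simp add: adjustable_def\<close>)
  next
    case False
    with assms(1) x show ?thesis
      by (simp add: adjust_def is_val_def)
  qed
qed

lemma shift_adjust: "shift (adjust S u) \<delta> = adjust S (shift u \<delta>)"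
  by (simp add: fun_eq_iff shift_def adjust_def ac_simps)

lemma adjustable_shift:
  assumes "adjustable T S (shift u \<delta>)" "0 \<le> \<delta>"
  shows "adjustable (T + \<delta>) S u"
proof -
  have "u x + ereal (T + \<delta>) = shift u \<delta> x + ereal T" for x
    by (cases "u x") (simp_all add: shift_def)
  moreover have "- ereal (T + \<delta>) \<le> u x" if "- ereal T \<le> shift u \<delta> x" for x
    using that by (cases "u x") (auto simp: shift_def)
  ultimately show ?thesis
    using assms by (auto simp: adjustable_def shift_def)
qed

lemma adjustable_partner:
  assumes "is_val XF u" "adjustable T S u" "\<beta> \<notin> Clk ` S" "\<And>b. \<beta> = Clk b \<Longrightarrow> b \<in> XF \<Longrightarrow> b \<in> D"
  shows "clk_val u \<beta> = -\<infinity> \<or> - ereal T \<le> clk_val u \<beta> \<or>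
    (\<exists>b s. \<beta> = Clk b \<and> u b = ereal (s - T) \<and> vk b = ereal s \<and> vk' b = ereal s)"
proof (cases \<beta>)
  case Zero
  with assms(2) show ?thesis
    by (simp add: adjustable_def)
next
  case (Clk b)
  show ?thesis
  proof (cases "b \<in> XF")
    case True
    with assms Clk have "u b = -\<infinity> \<or> - ereal T \<le> u b \<or> (u b + ereal T = vk b \<and> vk' b = vk b)"
      by (auto simp: adjustable_def)
    with Clk show ?thesis
      by (cases "u b") (auto intro: exI[of _ "r + T" for r])
  next
    case False
    with assms(1,2) have "- ereal T \<le> u b"
      by (auto simp: is_val_def adjustable_def intro: order_trans[of _ 0])
    with Clk show ?thesis
      by simp
  qed
qed

lemma adjustable_simK_moved:
  assumes "is_val XF u" "adjustable T S u" "a \<in> S"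
    and "\<beta> \<notin> Clk ` S" "\<And>b. \<beta> = Clk b \<Longrightarrow> b \<in> XF \<Longrightarrow> b \<in> D"
  shows "simK M (ediff (u a) (clk_val u \<beta>)) (ediff (adjust S u a) (clk_val u \<beta>))"
    and "simK M (ediff (clk_val u \<beta>) (u a)) (ediff (clk_val u \<beta>) (adjust S u a))"
proof -
  obtain r r' where r: "vk a = ereal r" "vk' a = ereal r'" "r < - real M" "r' < - real M"
    "u a = ereal (r - T)" "adjust S u a = ereal (r' - T)"
    using adjustable_value[OF assms(2,3)] .
  from adjustable_partner[OF assms(1,2,4,5)]
  consider "clk_val u \<beta> = -\<infinity> \<or> - ereal T \<le> clk_val u \<beta>"
    | b s where "\<beta> = Clk b" "u b = ereal (s - T)" "vk b = ereal s" "vk' b = ereal s"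
    by blast
  then have "simK M (ediff (u a) (clk_val u \<beta>)) (ediff (adjust S u a) (clk_val u \<beta>)) \<and>
      simK M (ediff (clk_val u \<beta>) (u a)) (ediff (clk_val u \<beta>) (adjust S u a))"
  proof cases
    case 1
    with r show ?thesis
      by (simp add: simK_ediff_far)
  next
    case 2
    with r show ?thesis
      using ediff_simK[of a b] ediff_simK[of b a] by simp
  qed
  then show "simK M (ediff (u a) (clk_val u \<beta>)) (ediff (adjust S u a) (clk_val u \<beta>))"
    and "simK M (ediff (clk_val u \<beta>) (u a)) (ediff (clk_val u \<beta>) (adjust S u a))"
    by auto
qed

lemma adjustable_simK_clk:
  assumes "is_val XF u" "adjustable T S u"
    and diag: "\<And>a b. \<alpha> = Clk a \<Longrightarrow> \<beta> = Clk b \<Longrightarrow> a \<in> XF \<Longrightarrow> b \<in> XF \<Longrightarrow> a \<in> D \<and> b \<in> D"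
  shows "simK M (ediff (clk_val u \<alpha>) (clk_val u \<beta>))
    (ediff (clk_val (adjust S u) \<alpha>) (clk_val (adjust S u) \<beta>))"
proof -
  have unmoved: "clk_val (adjust S u) \<gamma> = clk_val u \<gamma>" if "\<gamma> \<notin> Clk ` S" for \<gamma>
    using that by (cases \<gamma>) (auto simp: adjust_def)
  have future: "S \<subseteq> XF"
    using adjustable_future[OF assms(2)] .
  consider (both) a b where "\<alpha> = Clk a" "\<beta> = Clk b" "a \<in> S" "b \<in> S"
    | (left) a where "\<alpha> = Clk a" "a \<in> S" "\<beta> \<notin> Clk ` S"
    | (right) b where "\<beta> = Clk b" "b \<in> S" "\<alpha> \<notin> Clk ` S"
    | (neither) "\<alpha> \<notin> Clk ` S" "\<beta> \<notin> Clk ` S"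
    by blast
  then show ?thesis
  proof cases
    case both
    obtain ra ra' where "u a = ereal (ra - T)" "adjust S u a = ereal (ra' - T)"
      "vk a = ereal ra" "vk' a = ereal ra'"
      using adjustable_value[OF assms(2) both(3)] by metis
    moreover obtain rb rb' where "u b = ereal (rb - T)" "adjust S u b = ereal (rb' - T)"
      "vk b = ereal rb" "vk' b = ereal rb'"
      using adjustable_value[OF assms(2) both(4)] by metis
    ultimately show ?thesis
      using both ediff_simK[of a b] by simp
  next
    case left
    with diag future have "\<beta> = Clk b \<Longrightarrow> b \<in> XF \<Longrightarrow> b \<in> D" for b
      by blast
    with left unmoved show ?thesis
      using adjustable_simK_moved(1)[OF assms(1,2) left(2,3)] by simp
  next
    case right
    with diag future have "\<alpha> = Clk a \<Longrightarrow> a \<in> XF \<Longrightarrow> a \<in> D" for a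
      by blast
    with right unmoved show ?thesis
      using adjustable_simK_moved(2)[OF assms(1,2) right(2,3)] by simp
  next
    case neither
    then show ?thesis
      by (simp add: unmoved simK_refl)
  qed
qed

lemma sat_adjust:
  assumes "is_val XF u" "adjustable T S u" "admissible_guard XF D M g" "sat u g"
  shows "sat (adjust S u) g"
  unfolding sat_def
proof
  fix atom
  assume atom: "atom \<in> set g"
  obtain \<alpha> \<beta> s c where atom_def: "atom = (\<alpha>, \<beta>, s, c)"
    by (cases atom)
  from assms(3) atom have c: "zb_val c \<in> bset M"
    and diag: "\<And>a b. \<alpha> = Clk a \<Longrightarrow> \<beta> = Clk b \<Longrightarrow> a \<in> XF \<Longrightarrow> b \<in> XF \<Longrightarrow> a \<in> D \<and> b \<in> D"
    by (auto simp: admissible_guard_def atom_def)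
  from assms(4) atom have "sat_atom u (\<alpha>, \<beta>, s, c)"
    unfolding sat_def atom_def by blast
  then show "sat_atom (adjust S u) atom"
    unfolding atom_def by (rule sat_atom_simK[OF _ c adjustable_simK_clk[OF assms(1,2) diag]])
qed

lemma adjustable_before_prog:
  assumes sem: "prog_sem XF p u w" and safe: "release_safe XF D p u" and adj: "adjustable T E w"
  shows "adjustable T (E - changed_clocks p) u"
  unfolding adjustable_def
proof (intro conjI ballI)
  show "0 \<le> T" "E - changed_clocks p \<subseteq> N"
    using adj by (auto simp: adjustable_def)
next
  fix x
  assume "x \<in> E - changed_clocks p"
  with adj prog_sem_unchanged[OF sem] show "u x + ereal T = vk x"
    by (auto simp: adjustable_def)
next
  fix x
  assume x: "x \<in> XF \<inter> D - (E - changed_clocks p)"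
  show "u x = -\<infinity> \<or> - ereal T \<le> u x \<or> (u x + ereal T = vk x \<and> vk' x = vk x)"
  proof (cases "x \<in> changed_clocks p")
    case True
    with release_safe_changed_clocks[OF sem safe] x have "u x = 0 \<or> u x = -\<infinity>"
      by blast
    with adj show ?thesis
      by (auto simp: adjustable_def)
  next
    case False
    with x have "x \<in> XF \<inter> D - E"
      by blast
    with adj have "w x = -\<infinity> \<or> - ereal T \<le> w x \<or> (w x + ereal T = vk x \<and> vk' x = vk x)"
      unfolding adjustable_def by blast
    with prog_sem_unchanged[OF sem False] show ?thesis
      by simp
  qed
qed

lemma adjust_change:
  assumes "w \<in> change XF R u" "is_val XF (adjust S w)" "S \<subseteq> XF"
  shows "adjust S w \<in> change XF R (adjust (S - R) u)"
  using assms unfolding change_def adjust_def by auto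

lemma prog_sem_adjust:
  assumes "prog_sem XF p u w" "is_val XF u" "release_safe XF D p u"
    "\<forall>g. Guard g \<in> set p \<longrightarrow> admissible_guard XF D M g" and adj: "adjustable T E w"
  shows "prog_sem XF p (adjust (E - changed_clocks p) u) (adjust E w)"
  using assms(1-4)
proof (induction p arbitrary: u)
  case (Cons i p)
  show ?case
  proof (cases i)
    case (Guard g)
    with Cons.prems have sem: "prog_sem XF p u w" "sat u g" and safe: "release_safe XF D p u"
      by (auto dest: release_safe_Guard)
    have "sat (adjust (E - changed_clocks p) u) g"
      using sat_adjust[OF Cons.prems(2) adjustable_before_prog[OF sem(1) safe adj]]
        Cons.prems(4) Guard sem(2) by simp
    with Cons.IH[OF sem(1) Cons.prems(2) safe] Cons.prems(4) Guard show ?thesis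
      by simp
  next
    case (Change R)
    with Cons.prems(1) obtain w1 where w1: "w1 \<in> change XF R u" "prog_sem XF p w1 w"
      by auto
    have val: "is_val XF w1"
      using w1(1) by (simp add: change_def)
    have safe: "release_safe XF D p w1"
      using Cons.prems(3) Change w1(1) by (auto intro: release_safe_Change)
    have adj1: "adjustable T (E - changed_clocks p) w1"
      using adjustable_before_prog[OF w1(2) safe adj] .
    have "adjust (E - changed_clocks p) w1 \<in> change XF R (adjust (E - changed_clocks p - R) u)"
      using adjust_change[OF w1(1) adjustable_is_val[OF val adj1] adjustable_future[OF adj1]] .
    moreover have "E - changed_clocks p - R = E - changed_clocks (Change R # p)"
      by auto
    ultimately show ?thesis
      using Cons.IH[OF w1(2) val safe] Cons.prems(4) Change by auto
  qed
qed simp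

lemma adjusted_step:
  assumes step: "step XF A q u \<delta> tr q' w"
    and safe: "release_safe XF D (t_prog tr) (shift u \<delta>)"
    and guards: "\<forall>g. Guard g \<in> set (t_prog tr) \<longrightarrow> admissible_guard XF D M g"
    and adj: "adjustable T E w"
  shows "step XF A q (adjust (E - changed_clocks (t_prog tr)) u) \<delta> tr q' (adjust E w)"
proof -
  let ?S = "E - changed_clocks (t_prog tr)"
  from step have sem: "prog_sem XF (t_prog tr) (shift u \<delta>) w"
    and vals: "is_val XF u" "is_val XF (shift u \<delta>)" "is_val XF w" and "0 \<le> \<delta>"
    by (auto simp: step_def)
  have adj_shift: "adjustable T ?S (shift u \<delta>)"
    using adjustable_before_prog[OF sem safe adj] .
  then have "adjustable (T + \<delta>) ?S u"
    using \<open>0 \<le> \<delta>\<close> by (rule adjustable_shift)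
  with step show ?thesis
    unfolding step_def shift_adjust
    using adjustable_is_val vals adj adj_shift prog_sem_adjust[OF sem vals(2) safe guards adj]
    by blast
qed

lemma adjustable_on_path:
  assumes path: "is_path XF A k q v d t" and endpoint: "v k = vk"
    and safe: "\<forall>i \<in> {1..<k}. release_safe XF D (t_prog (t i)) (shift (v i) (d i))"
    and j: "1 \<le> j" "j \<le> k"
  shows "adjustable (remaining_delay d k j) (N - released_from t k j) (v j)"
  unfolding adjustable_def
proof (intro conjI ballI)
  show "0 \<le> remaining_delay d k j"
    using remaining_delay_nonneg[OF path j(1)] .
  show "N - released_from t k j \<subseteq> N"
    by blast
next
  fix x
  assume "x \<in> N - released_from t k j"
  with path_unreleased[OF path j] endpoint
  show "v j x + ereal (remaining_delay d k j) = vk x"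
    by blast
next
  fix x
  assume x: "x \<in> XF \<inter> D - (N - released_from t k j)"
  show "v j x = -\<infinity> \<or> - ereal (remaining_delay d k j) \<le> v j x \<or>
    (v j x + ereal (remaining_delay d k j) = vk x \<and> vk' x = vk x)"
  proof (cases "x \<in> released_from t k j")
    case True
    with path_released[OF path safe j] x show ?thesis
      by blast
  next
    case False
    with path_unreleased[OF path j False] endpoint eq_outside_N x show ?thesis
      by blast
  qed
qed

lemma adjusted_path:
  assumes path: "is_path XF A k q v d t" and endpoint: "v k = vk"
    and safe: "\<forall>i \<in> {1..<k}. release_safe XF D (t_prog (t i)) (shift (v i) (d i))"
    and guards: "\<forall>i \<in> {1..<k}. \<forall>g. Guard g \<in> set (t_prog (t i)) \<longrightarrow> admissible_guard XF D M g"
  shows "is_path XF A k q (\<lambda>j. adjust (N - released_from t k j) (v j)) d t"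
proof -
  let ?v' = "\<lambda>j. adjust (N - released_from t k j) (v j)"
  have "step XF A (q i) (?v' i) (d i) (t i) (q (Suc i)) (?v' (Suc i))" if i: "i \<in> {1..<k}" for i
  proof -
    have released: "N - released_from t k i =
        N - released_from t k (Suc i) - changed_clocks (t_prog (t i))"
      using i by (auto simp: released_from_Suc)
    have "step XF A (q i) (v i) (d i) (t i) (q (Suc i)) (v (Suc i))"
      using path i by (simp add: is_path_def)
    from adjusted_step[OF this _ _ adjustable_on_path[OF path endpoint safe, of "Suc i"]]
    show ?thesis
      using safe guards i by (simp add: released)
  qed
  moreover have "is_val XF (?v' j)" if "j \<in> {1..k}" for j
  proof (rule adjustable_is_val)
    show "is_val XF (v j)"
      using path that by (simp add: is_path_def)
    show "adjustable (remaining_delay d k j) (N - released_from t k j) (v j)"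
      using adjustable_on_path[OF path endpoint safe] that by simp
  qed
  ultimately show ?thesis
    using path by (simp add: is_path_def)
qed

end

lemma endpoint_change_far_clocks:
  assumes sim: "sim_M M v1 vk" and approx: "approx_M M v1 vk'" and val: "is_val XF v1"
    and near: "\<forall>x \<in> {x. - ereal (real M) \<le> v1 x}. vk' x = vk x"
  shows "endpoint_change XF M {x \<in> XF. v1 x \<noteq> -\<infinity> \<and> v1 x < ereal (- real M)} vk vk'"
proof
  show "simK M (ediff (vk x) (vk y)) (ediff (vk' x) (vk' y))" for x y
    using simK_trans[OF simK_sym[OF sim_M_ediff_simK[OF sim]] approx_M_ediff_simK[OF approx]] .
  show "vk' x = vk x" if "x \<notin> {x \<in> XF. v1 x \<noteq> -\<infinity> \<and> v1 x < ereal (- real M)}" for x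
    using sim_M_approx_M_eq_off_far[OF sim approx val near that] .
qed (use sim_M_approx_M_far[OF sim approx] in auto)

theorem lemma11:
  fixes A :: "('q, 'a, 'c::finite) gta"
    and XF :: "'c set" and M :: nat and k :: nat
    and q :: "nat \<Rightarrow> 'q" and v :: "nat \<Rightarrow> 'c valuation"
    and d :: "nat \<Rightarrow> real" and t :: "nat \<Rightarrow> ('q, 'a, 'c) transition"
    and vk' :: "'c valuation"
  assumes "is_gta A"
    and "safe XF A"
    and "bounded_by A M"
    and "is_path XF A k q v d t"
    and "sim_M M (v 1) (v k)"
    and "\<forall>x \<in> XF. (\<exists>i \<in> {1..<k}. released x (t i)) \<or> v 1 x = - \<infinity>"
    and "is_val XF vk'"
    and "\<forall>x \<in> {x. - ereal (real M) \<le> v 1 x}. vk' x = v k x"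
    and "approx_M M (v 1) vk'"
  shows "\<exists>v'. v' 1 = v 1 \<and> v' k = vk' \<and> is_path XF A k q v' d t"
proof -
  define N where "N = {x \<in> XF. v 1 x \<noteq> -\<infinity> \<and> v 1 x < ereal (- real M)}"
  have "is_val XF (v 1)"
    using assms(4) by (simp add: is_path_def)
  from assms(5,9) this assms(8) interpret endpoint_change XF "XD XF A" M N "v k" vk'
    unfolding N_def by (rule endpoint_change_far_clocks)
  have "is_path XF A k q (\<lambda>j. adjust (N - released_from t k j) (v j)) d t"
    using adjusted_path[OF assms(4) refl path_release_safe[OF assms(2,4)]
        path_admissible_guards[OF assms(3,4)]] .
  moreover have "adjust (N - released_from t k 1) (v 1) = v 1"
  proof -
    have "N \<subseteq> released_from t k 1"
    proof
      fix x
      assume "x \<in> N"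
      with assms(6) obtain i where "i \<in> {1..<k}" "released x (t i)"
        by (auto simp: N_def)
      then show "x \<in> released_from t k 1"
        by (auto simp: released_from_def released_iff_changed_clocks)
    qed
    then have "N - released_from t k 1 = {}"
      by blast
    then show ?thesis
      by (simp only: adjust_empty)
  qed
  moreover have "adjust (N - released_from t k k) (v k) = vk'"
    by (simp add: released_from_def adjust_N_endpoint)
  ultimately show ?thesis
    by (intro exI[of _ "\<lambda>j. adjust (N - released_from t k j) (v j)"]) simp
qed

end
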